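(* Let $L_1',L_2'\subseteq\mathcal{P}$ be simple event logs, $bk\in\mathcal{A}^*$, $n\in\mathbb{N}_{\ge1}$, $M_1=ms^{L_1',n}(bk)$ and $M_2=ms^{L_2',n}(bk)$. Let $CG(M_1,M_2)$ be the set of pairs $(g_1',g_2')$ where $g_1'$ is a group of $M_1$, $g_2'$ is a group of $M_2$, and $g_1'\overset{n}{\sim}g_2'$, and set $F(M_1,M_2)=\sum_{(g_1',g_2')\in CG(M_1,M_2)}\big(|g_1'|-\min(|g_1'|,|g_2'|)\big)$. Then for every linker $f$ (w.r.t. $n$) from $L_1'$ to $L_2'$, at least $F(M_1,M_2)$ elements $p_1'\in M_1$ satisfy $f(p_1')\notin M_2$; more precisely, for each $(g_1',g_2')\in CG(M_1,M_2)$, at least $|g_1'|-\min(|g_1'|,|g_2'|)$ elements of $g_1'$ are not mapped by $f$ into $M_2$.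
   Context: $\mathcal{P}=\mathcal{C}\times\mathcal{A}^*\times\mathcal{S}$ is the set of simple process instances $p=(c,\sigma,s)$ (case id, sequence of activities, sensitive value) with projections $\pi_c,\pi_\sigma,\pi_s$; a simple event log is a finite $L\subseteq\mathcal{P}$ in which elements with equal case ids are equal. $\sqsubseteq$ is the (not necessarily contiguous) subsequence relation; $pref(\langle a_1,\dots,a_m\rangle)=\{\langle a_1,\dots,a_k\rangle\mid 1\le k\le m\}$; $LCS(\sigma_1,\sigma_2)$ is the set of longest common subsequences, $LCS^{\sigma_1}_{\sigma_2}$ their length, and $SCS^{\sigma_1}_{\sigma_2}$ the length of a shortest common super-sequence. Specialization: $p'\preceq_n p$ iff $\pi_\sigma(p')\sqsubseteq\pi_\sigma(p)$, $|\pi_\sigma(p)|\le|\pi_\sigma(p')|+n$, and $\pi_s(p)=\pi_s(p')$. Matching set: $ms^{L',n}(bk)=\{p'\in L'\mid \exists p\in\mathcal{P}: p'\preceq_n p \wedge bk\sqsubseteq\pi_\sigma(p)\}$. A group of a matching set $M$ is a nonempty set of the form $\{p\in M\mid \pi_s(p)=v\}$ for some $v\in\mathcal{S}$. Linker: a total injective function $f:L_1'\to L_2'$ such that for every $p_1'\in L_1'$ there exist $p_1,p_2\in\mathcal{P}$ with $p_1'\preceq_n p_1$, $f(p_1')\preceq_n p_2$, $\pi_s(p_1)=\pi_s(p_2)$, and $\pi_\sigma(p_1)\in pref(\pi_\sigma(p_2))$. Comparable sequences: $\sigma_1\overset{n}{\sim}\sigma_2$ iff $n\ge|\sigma_1|-LCS^{\sigma_1}_{\sigma_2}$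 in case some $\sigma\in LCS(\sigma_1,\sigma_2)$ lies in $pref(\sigma_2)$, and $n\ge SCS^{\sigma_1}_{\sigma_2}-\min(|\sigma_1|,|\sigma_2|)$ otherwise. Comparable process instances: $p_1\overset{n}{\sim}p_2$ iff $\pi_s(p_1)=\pi_s(p_2)$ and $\pi_\sigma(p_1)\overset{n}{\sim}\pi_\sigma(p_2)$. Comparable groups: $g_1'\overset{n}{\sim}g_2'$ iff $p_1'\overset{n}{\sim}p_2'$ for all $p_1'\in g_1'$, $p_2'\in g_2'$. *)

theory Defs
  imports Main "HOL-Library.Sublist"
begin

type_synonym ('c,'a,'s) pinst = "'c \<times> 'a list \<times> 's"

definition pc :: "('c,'a,'s) pinst \<Rightarrow> 'c" where "pc p = fst p"
definition pseq :: "('c,'a,'s) pinst \<Rightarrow> 'a list" where "pseq p = fst (snd p)"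
definition psens :: "('c,'a,'s) pinst \<Rightarrow> 's" where "psens p = snd (snd p)"

definition simple_log :: "('c,'a,'s) pinst set \<Rightarrow> bool" where
  "simple_log L \<longleftrightarrow> finite L \<and> (\<forall>p\<in>L. \<forall>q\<in>L. pc p = pc q \<longrightarrow> p = q)"

definition pref :: "'a list \<Rightarrow> 'a list set" where
  "pref xs = {take k xs | k. 1 \<le> k \<and> k \<le> length xs}"

definition LCS :: "'a list \<Rightarrow> 'a list \<Rightarrow> 'a list set" where
  "LCS s1 s2 = {s. subseq s s1 \<and> subseq s s2 \<and>
                  (\<forall>t. subseq t s1 \<and> subseq t s2 \<longrightarrow> length t \<le> length s)}"

definition LCS_len :: "'a list \<Rightarrow> 'a list \<Rightarrow> nat" where
  "LCS_len s1 s2 = Max {length s | s. subseq s s1 \<and> subseq s s2}"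

definition SCS_len :: "'a list \<Rightarrow> 'a list \<Rightarrow> nat" where
  "SCS_len s1 s2 = (LEAST k. \<exists>s. subseq s1 s \<and> subseq s2 s \<and> length s = k)"

definition spec :: "nat \<Rightarrow> ('c,'a,'s) pinst \<Rightarrow> ('c,'a,'s) pinst \<Rightarrow> bool" where
  "spec n p' p \<longleftrightarrow> subseq (pseq p') (pseq p) \<and> length (pseq p) \<le> length (pseq p') + n
                   \<and> psens p = psens p'"

definition ms :: "('c,'a,'s) pinst set \<Rightarrow> nat \<Rightarrow> 'a list \<Rightarrow> ('c,'a,'s) pinst set" where
  "ms L n bk = {p'\<in>L. \<exists>p. spec n p' p \<and> subseq bk (pseq p)}"

definition is_group :: "('c,'a,'s) pinst set \<Rightarrow> ('c,'a,'s) pinst set \<Rightarrow> bool" where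
  "is_group M g \<longleftrightarrow> g \<noteq> {} \<and> (\<exists>v. g = {p\<in>M. psens p = v})"

definition linker :: "nat \<Rightarrow> ('c,'a,'s) pinst set \<Rightarrow> ('c,'a,'s) pinst set
                      \<Rightarrow> (('c,'a,'s) pinst \<Rightarrow> ('c,'a,'s) pinst) \<Rightarrow> bool" where
  "linker n L1 L2 f \<longleftrightarrow> f ` L1 \<subseteq> L2 \<and> inj_on f L1 \<and>
     (\<forall>p1'\<in>L1. \<exists>p1 p2. spec n p1' p1 \<and> spec n (f p1') p2 \<and> psens p1 = psens p2
                       \<and> pseq p1 \<in> pref (pseq p2))"

definition comp_seq :: "nat \<Rightarrow> 'a list \<Rightarrow> 'a list \<Rightarrow> bool" where
  "comp_seq n s1 s2 \<longleftrightarrow>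
     (if \<exists>s\<in>LCS s1 s2. s \<in> pref s2
      then n \<ge> length s1 - LCS_len s1 s2
      else n \<ge> SCS_len s1 s2 - min (length s1) (length s2))"

definition comp_pi :: "nat \<Rightarrow> ('c,'a,'s) pinst \<Rightarrow> ('c,'a,'s) pinst \<Rightarrow> bool" where
  "comp_pi n p1 p2 \<longleftrightarrow> psens p1 = psens p2 \<and> comp_seq n (pseq p1) (pseq p2)"

definition comp_group :: "nat \<Rightarrow> ('c,'a,'s) pinst set \<Rightarrow> ('c,'a,'s) pinst set \<Rightarrow> bool" where
  "comp_group n g1 g2 \<longleftrightarrow> (\<forall>p1\<in>g1. \<forall>p2\<in>g2. comp_pi n p1 p2)"

definition CG :: "nat \<Rightarrow> ('c,'a,'s) pinst set \<Rightarrow> ('c,'a,'s) pinst set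
                  \<Rightarrow> (('c,'a,'s) pinst set \<times> ('c,'a,'s) pinst set) set" where
  "CG n M1 M2 = {(g1, g2). is_group M1 g1 \<and> is_group M2 g2 \<and> comp_group n g1 g2}"

definition Fcount :: "nat \<Rightarrow> ('c,'a,'s) pinst set \<Rightarrow> ('c,'a,'s) pinst set \<Rightarrow> nat" where
  "Fcount n M1 M2 = (\<Sum>(g1, g2)\<in>CG n M1 M2. card g1 - min (card g1) (card g2))"

end

theory Submission
  imports Defs "HOL-Library.Disjoint_Sets"
begin

text \<open>A linker preserves sensitive values, so inside a comparable pair \<open>(g1, g2)\<close> it injects the
  members of \<open>g1\<close> that it maps into \<open>M2\<close> into \<open>g2\<close>; at most \<open>|g2|\<close> of them can therefore land
  in \<open>M2\<close>. Distinct pairs of \<open>CG\<close> have distinct, hence disjoint, first components, so the per-pair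
  bounds add up to the global one.\<close>

lemma linker_psens:
  assumes "linker n L1 L2 f" and "p \<in> L1"
  shows "psens (f p) = psens p"
  using assms unfolding linker_def spec_def by force

lemma ms_subset: "ms L n bk \<subseteq> L"
  unfolding ms_def by auto

lemma is_group_subset: "is_group M g \<Longrightarrow> g \<subseteq> M"
  unfolding is_group_def by auto

lemma is_group_eq:
  assumes "is_group M g" and "p \<in> g"
  shows "g = {q\<in>M. psens q = psens p}"
  using assms unfolding is_group_def by auto

lemma CG_snd_eq:
  assumes "(g1, g2) \<in> CG n M1 M2" and "p \<in> g1"
  shows "g2 = {q\<in>M2. psens q = psens p}"
proof -
  have g1: "is_group M1 g1" and g2: "is_group M2 g2" and comp: "comp_group n g1 g2"
    using assms(1) unfolding CG_def by auto
  obtain q where q: "q \<in> g2"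
    using g2 unfolding is_group_def by auto
  have "psens q = psens p"
    using comp assms(2) q unfolding comp_group_def comp_pi_def by auto
  then show ?thesis
    using is_group_eq[OF g2 q] by simp
qed

lemma disjoint_family_on_CG_fst: "disjoint_family_on fst (CG n M1 M2)"
proof (unfold disjoint_family_on_def, intro ballI impI)
  fix x y
  assume x: "x \<in> CG n M1 M2" and y: "y \<in> CG n M1 M2" and "x \<noteq> y"
  obtain g1 g2 h1 h2 where xy: "x = (g1, g2)" "y = (h1, h2)"
    by fastforce
  show "fst x \<inter> fst y = {}"
  proof (rule ccontr)
    assume "fst x \<inter> fst y \<noteq> {}"
    then obtain p where p: "p \<in> g1" "p \<in> h1"
      using xy by auto
    have "g1 = h1"
      using x y xy p is_group_eq[of M1 g1 p] is_group_eq[of M1 h1 p] unfolding CG_def by auto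
    moreover have "g2 = h2"
      using x y xy p CG_snd_eq[of g1 g2 n M1 M2 p] CG_snd_eq[of h1 h2 n M1 M2 p] by auto
    ultimately show False
      using \<open>x \<noteq> y\<close> xy by simp
  qed
qed

lemma card_diff_le_card_not_mapped_into:
  assumes "finite B" and "inj_on f A" and "f ` {x\<in>A. f x \<in> M} \<subseteq> B"
  shows "card A - min (card A) (card B) \<le> card {x\<in>A. f x \<notin> M}"
proof (cases "finite A")
  case True
  have "card {x\<in>A. f x \<in> M} \<le> card B"
    using card_inj_on_le[OF inj_on_subset[OF assms(2)] assms(3) assms(1)] by auto
  moreover have "card A = card {x\<in>A. f x \<in> M} + card {x\<in>A. f x \<notin> M}"
    using True by (subst card_Un_disjoint[symmetric]) (auto intro: arg_cong[where f = card])
  ultimately show ?thesis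
    by linarith
qed simp

lemma sum_card_le_card_if_disjoint_family_on:
  assumes "finite S" and "\<And>i. i \<in> I \<Longrightarrow> A i \<subseteq> S" and "disjoint_family_on A I"
  shows "(\<Sum>i\<in>I. card (A i)) \<le> card S"
proof (cases "finite I")
  case True
  have "(\<Sum>i\<in>I. card (A i)) = card (\<Union>i\<in>I. A i)"
    using assms True by (intro card_UN_disjoint'[symmetric]) (auto intro: finite_subset)
  also have "\<dots> \<le> card S"
    using assms by (intro card_mono) auto
  finally show ?thesis .
qed simp

lemma CG_pair_bound:
  assumes "linker n L1 L2 f" and "M1 \<subseteq> L1" and "finite M2"
    and "(g1, g2) \<in> CG n M1 M2"
  shows "card g1 - min (card g1) (card g2) \<le> card {p\<in>g1. f p \<notin> M2}"
proof (rule card_diff_le_card_not_mapped_into)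
  have g1: "g1 \<subseteq> L1" and g2: "g2 \<subseteq> M2"
    using assms(2,4) is_group_subset unfolding CG_def by blast+
  show "finite g2"
    using g2 assms(3) by (rule finite_subset)
  show "inj_on f g1"
    using assms(1) g1 unfolding linker_def by (auto intro: inj_on_subset)
  show "f ` {p\<in>g1. f p \<in> M2} \<subseteq> g2"
    using CG_snd_eq[OF assms(4)] linker_psens[OF assms(1)] g1 by auto
qed

theorem theorem3:
  fixes L1 L2 :: "('c,'a,'s) pinst set" and bk :: "'a list" and n :: nat
    and f :: "('c,'a,'s) pinst \<Rightarrow> ('c,'a,'s) pinst"
  assumes "simple_log L1" and "simple_log L2" and "n \<ge> 1"
    and "linker n L1 L2 f"
  shows "Fcount n (ms L1 n bk) (ms L2 n bk) \<le> card {p\<in>ms L1 n bk. f p \<notin> ms L2 n bk}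
       \<and> (\<forall>(g1, g2)\<in>CG n (ms L1 n bk) (ms L2 n bk).
            card g1 - min (card g1) (card g2) \<le> card {p\<in>g1. f p \<notin> ms L2 n bk})"
proof -
  define M1 where "M1 = ms L1 n bk"
  define M2 where "M2 = ms L2 n bk"
  have fin: "finite M1" "finite M2"
    using assms(1,2) ms_subset finite_subset unfolding M1_def M2_def simple_log_def by metis+
  have pair: "\<forall>(g1, g2)\<in>CG n M1 M2. card g1 - min (card g1) (card g2) \<le> card {p\<in>g1. f p \<notin> M2}"
    using CG_pair_bound[OF assms(4) _ fin(2)] ms_subset unfolding M1_def by blast
  have "Fcount n M1 M2 \<le> (\<Sum>x\<in>CG n M1 M2. card {p\<in>fst x. f p \<notin> M2})"
    unfolding Fcount_def using pair by (intro sum_mono) auto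
  also have "\<dots> \<le> card {p\<in>M1. f p \<notin> M2}"
  proof (rule sum_card_le_card_if_disjoint_family_on)
    show "disjoint_family_on (\<lambda>x. {p\<in>fst x. f p \<notin> M2}) (CG n M1 M2)"
      using disjoint_family_on_CG_fst unfolding disjoint_family_on_def by blast
    show "{p\<in>fst x. f p \<notin> M2} \<subseteq> {p\<in>M1. f p \<notin> M2}" if "x \<in> CG n M1 M2" for x
      using that is_group_subset[of M1 "fst x"] unfolding CG_def by auto
  qed (use fin in simp)
  finally show ?thesis
    using pair unfolding M1_def M2_def by blast
qed

end
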